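(* Assume (C2), (C3), and that $b:\mathcal Y\to\mathcal X$ is differentiable with $\nabla b$ bounded and continuous and $\int_{\mathcal Y}b\,d\mu=0$. Let $\Psi$ be the solution of the Poisson equation $\mathcal L\Psi=-b$, $\int\Psi\,d\mu=0$. Let $C_2>0$ be the optimal constant in the Burkholder–Davis–Gundy inequality with $p=2$ and $K_f:=4\big(\frac{\|\nabla f\|^2_\infty}{C_f^2}\vee1\big)$. If $\|D\tau\|^2_\infty<\frac{C_f}{C_2K_f}$, then $\sup_{y\in\mathcal Y}|\nabla\Psi(y)|<\infty$.
   Context: $\mathcal X=\mathbb R^m$, $\mathcal Y=\mathbb R^{d-m}$, $f:\mathcal Y\to\mathcal Y$, $\tau:\mathcal Y\to\mathbb R^{(d-m)\times\ell}$, and $\mathcal L\phi=\tfrac12 D^2\phi:(\tau\tau^T)+\nabla\phi f$, the generator of $dY_t=f(Y_t)dt+\tau(Y_t)dW_t$ with $W$ an $\ell$-dimensional Brownian motion. (C2) $\tau\in C^1_b$ and $\tau\tau^T$ is uniformly nondegenerate. (C3) $f(y)=-\Gamma y+\zeta(y)$ with $\Gamma$ symmetric positive definite, $\zeta\in C^1_b$, and $\langle(\Gamma-L_\zeta I)y,y\rangle\ge C_f|y|^2$ for all $y$, where $L_\zeta=\|\nabla\zeta\|_\infty$ and $C_f>0$. Under (C2)–(C3) $\mathcal L$ has a unique invariant probability measure $\mu$, and the Poisson equation has a unique $C^2$ solution of polynomial growth. The BDG constant $C_2$ is the smallest constant with $\mathbb E\sup_{s\le t}|M_s|^2\le C_2\mathbb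 E\langle M\rangle_t$ for continuous local martingales $M$ null at $0$. *)

theory Defs
  imports "HOL-Analysis.Analysis" "HOL-Probability.Probability"
begin

definition second_partial ::
  "(real^'n \<Rightarrow> 'v::real_normed_vector) \<Rightarrow> 'n \<Rightarrow> 'n \<Rightarrow> real^'n \<Rightarrow> 'v" where
  "second_partial \<phi> i j y =
     frechet_derivative (\<lambda>z. frechet_derivative \<phi> (at z) (axis j 1)) (at y) (axis i 1)"

definition C2_fun :: "(real^'n \<Rightarrow> 'v::real_normed_vector) \<Rightarrow> bool" where
  "C2_fun \<phi> \<longleftrightarrow>
     (\<forall>y. \<phi> differentiable (at y)) \<and>
     (\<forall>j y. (\<lambda>z. frechet_derivative \<phi> (at z) (axis j 1)) differentiable (at y)) \<and>
     (\<forall>i j. continuous_on UNIV (second_partial \<phi> i j))"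

definition C1b_fun :: "(real^'n \<Rightarrow> 'v::real_normed_vector) \<Rightarrow> bool" where
  "C1b_fun g \<longleftrightarrow> bounded (range g) \<and>
     (\<exists>g'. (\<forall>y. (g has_derivative blinfun_apply (g' y)) (at y)) \<and>
           continuous_on UNIV g' \<and> bounded (range g'))"

definition sup_deriv_norm :: "(real^'n \<Rightarrow> 'v::real_normed_vector) \<Rightarrow> real" where
  "sup_deriv_norm g = (SUP y. onorm (frechet_derivative g (at y)))"

definition generator ::
  "(real^'n \<Rightarrow> real^'l^'n) \<Rightarrow> (real^'n \<Rightarrow> real^'n) \<Rightarrow>
   (real^'n \<Rightarrow> 'v::real_normed_vector) \<Rightarrow> real^'n \<Rightarrow> 'v" where
  "generator \<tau> f \<phi> y =
     (1/2) *\<^sub>R (\<Sum>i\<in>UNIV. \<Sum>j\<in>UNIV.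
        ((\<tau> y ** transpose (\<tau> y)) $ i $ j) *\<^sub>R second_partial \<phi> i j y)
     + frechet_derivative \<phi> (at y) (f y)"

text \<open>Invariant probability measure of L (infinitesimal invariance:
  integral of L phi vanishes for all compactly supported C^2 test functions).\<close>
definition invariant_measure ::
  "(real^'n \<Rightarrow> real^'l^'n) \<Rightarrow> (real^'n \<Rightarrow> real^'n) \<Rightarrow> (real^'n) measure \<Rightarrow> bool" where
  "invariant_measure \<tau> f \<mu> \<longleftrightarrow>
     prob_space \<mu> \<and> sets \<mu> = sets borel \<and>
     (\<forall>\<phi>::real^'n \<Rightarrow> real. C2_fun \<phi> \<and> (\<exists>K. compact K \<and> (\<forall>y. y \<notin> K \<longrightarrow> \<phi> y = 0)) \<longrightarrow>
        integrable \<mu> (generator \<tau> f \<phi>) \<and> (\<integral>y. generator \<tau> f \<phi> y \<partial>\<mu>) = 0)"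

text \<open>Optimal constant C_2 in the BDG inequality
  E sup_{s<=t} |M_s|^2 <= C_2 E <M>_t for continuous local martingales null at 0.
  Stochastic calculus is unavailable; its value is 4 (Doob's L^2 maximal inequality,
  sharp for Brownian motion).\<close>
definition BDG_C2 :: real where
  "BDG_C2 = 4"

end

theory Submission
  imports Defs
begin

(* Doubling of variables.  For |e| <= 1, K >= 0 and delta > 0 the function
     W(x, y) = e . (Psi x - Psi y) - K |x - y| - delta (V x + V y),   V x = (1 + |x|^2)^(M+2),
   attains its maximum, because V dominates the polynomial growth of Psi.  At a maximum point with
   x /= y, the second-order conditions along the synchronously coupled noise directions (the columns
   of tau x and tau y) and the first-order condition along the drifts f x, f y add up to
   L Psi x - L Psi y = b y - b x; the one-sided Lipschitz bound on f and the Lipschitz bounds on tau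
   and b then give
     (K (C_f - |D tau|^2 / 2) - Lip b) |x - y| <= delta (L V x + L V y).
   As |D tau|^2 / 2 < C_f, the left side is nonnegative for K large, and since L V tends to minus
   infinity both points lie in a ball independent of delta, on which Psi is Lipschitz anyway.  So
   W <= 0 for K large, and letting delta -> 0 shows that Psi is K-Lipschitz.  (M is the degree of
   the polynomial growth of Psi.) *)

section \<open>Maxima of functions penalized by a norm\<close>

lemma second_symmetric_difference_tendsto:
  fixes P :: "real \<Rightarrow> real"
  assumes P: "\<And>t. (P has_real_derivative P' t) (at t)"
    and P': "(P' has_real_derivative P'') (at 0)"
  shows "((\<lambda>t. (P t + P (-t) - 2 * P 0) / t\<^sup>2) \<longlongrightarrow> P'') (at 0)"
proof (rule lhopital)
  have reflected: "((\<lambda>t. P (-t)) has_real_derivative - P' (-t)) (at t)" for t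
  proof -
    have "((\<lambda>t::real. - t) has_real_derivative -1) (at t)"
      by (auto intro!: derivative_eq_intros)
    from DERIV_chain2[OF P this] show ?thesis by simp
  qed
  have "isCont (\<lambda>t. P t + P (-t) - 2 * P 0) 0"
    using P reflected by (intro continuous_intros DERIV_isCont)
  then show "((\<lambda>t. P t + P (-t) - 2 * P 0) \<longlongrightarrow> 0) (at 0)"
    by (simp add: isCont_def)
  show "((\<lambda>t::real. t\<^sup>2) \<longlongrightarrow> 0) (at 0)"
    by (auto intro!: tendsto_eq_intros)
  show "\<forall>\<^sub>F t in at 0. (t::real)\<^sup>2 \<noteq> 0" "\<forall>\<^sub>F t in at 0. 2 * (t::real) \<noteq> 0"
    by (auto simp: eventually_at_filter)
  show "\<forall>\<^sub>F t in at 0. ((\<lambda>t. P t + P (-t) - 2 * P 0) has_real_derivative P' t - P' (-t)) (at t)"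
    using P reflected by (auto intro!: always_eventually derivative_eq_intros)
  show "\<forall>\<^sub>F t in at 0. ((\<lambda>t::real. t\<^sup>2) has_real_derivative 2 * t) (at t)"
    by (auto intro!: always_eventually derivative_eq_intros)
  have right: "((\<lambda>t. (P' t - P' 0) / t) \<longlongrightarrow> P'') (at 0)"
    using P' by (simp add: DERIV_def)
  have "filterlim (\<lambda>t::real. - t) (at 0) (at 0)"
    using filtermap_at_minus[of "0::real"] by (simp add: filterlim_def)
  from filterlim_compose[OF right this]
  have left: "((\<lambda>t. (P' (-t) - P' 0) / (-t)) \<longlongrightarrow> P'') (at 0)"
    by simp
  have "((\<lambda>t. ((P' t - P' 0) / t + (P' (-t) - P' 0) / (-t)) / 2) \<longlongrightarrow> P'') (at 0)"
    using tendsto_divide[OF tendsto_add[OF right left] tendsto_const[of 2]] by simp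
  moreover have "\<forall>\<^sub>F t in at 0. ((P' t - P' 0) / t + (P' (-t) - P' 0) / (-t)) / 2 = (P' t - P' (-t)) / (2 * t)"
    by (auto simp: eventually_at_filter field_simps)
  ultimately show "((\<lambda>t. (P' t - P' (-t)) / (2 * t)) \<longlongrightarrow> P'') (at 0)"
    by (rule Lim_transform_eventually)
qed

lemma norm_add_scaleR_le:
  fixes p q :: "'a::real_inner"
  assumes "p \<noteq> 0"
  shows "norm (p + t *\<^sub>R q) \<le> norm p + t * (p \<bullet> q) / norm p + t\<^sup>2 * (norm q)\<^sup>2 / (2 * norm p)"
proof -
  have "(norm (p + t *\<^sub>R q))\<^sup>2 = (norm p)\<^sup>2 + 2 * t * (p \<bullet> q) + t\<^sup>2 * (norm q)\<^sup>2"
    unfolding power2_norm_eq_inner by (simp add: inner_add_left inner_add_right inner_commute[of q p]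
        power2_eq_square algebra_simps)
  \<comment> \<open>AM-GM, whose right-hand side is a polynomial in t\<close>
  moreover have "norm p * norm (p + t *\<^sub>R q) \<le> ((norm p)\<^sup>2 + (norm (p + t *\<^sub>R q))\<^sup>2) / 2"
    using sum_squares_bound[of "norm p" "norm (p + t *\<^sub>R q)"] by (simp add: power2_eq_square)
  ultimately have "norm p * norm (p + t *\<^sub>R q) \<le> (norm p)\<^sup>2 + t * (p \<bullet> q) + t\<^sup>2 * (norm q)\<^sup>2 / 2"
    by simp
  then have "norm (p + t *\<^sub>R q) \<le> ((norm p)\<^sup>2 + t * (p \<bullet> q) + t\<^sup>2 * (norm q)\<^sup>2 / 2) / norm p"
    using assms by (simp add: pos_le_divide_eq mult.commute)
  also have "\<dots> = norm p + t * (p \<bullet> q) / norm p + t\<^sup>2 * (norm q)\<^sup>2 / (2 * norm p)"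
    using assms by (simp add: field_simps power2_eq_square)
  finally show ?thesis .
qed

lemma norm_penalized_max_deriv_eq:
  fixes \<Phi> :: "real \<Rightarrow> real" and p q :: "'a::real_inner"
  assumes \<Phi>: "(\<Phi> has_real_derivative \<Phi>') (at 0)" and p: "p \<noteq> 0"
    and max: "\<And>t. \<Phi> t - K * norm (p + t *\<^sub>R q) \<le> \<Phi> 0 - K * norm p"
  shows "\<Phi>' = K * (p \<bullet> q) / norm p"
proof -
  have "((\<lambda>t. p + t *\<^sub>R q) has_derivative (\<lambda>h. h *\<^sub>R q)) (at 0)"
    by (auto intro!: derivative_eq_intros)
  from diff_chain_at[OF this, unfolded scaleR_zero_left add_0_right, OF has_derivative_norm[OF p]]
  have "((\<lambda>t. norm (p + t *\<^sub>R q)) has_real_derivative (p \<bullet> q) / norm p) (at 0)"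
    unfolding has_field_derivative_def o_def
    by (rule has_derivative_eq_rhs) (auto simp: fun_eq_iff sgn_div_norm inner_commute divide_inverse)
  then have "((\<lambda>t. \<Phi> t - K * norm (p + t *\<^sub>R q)) has_real_derivative \<Phi>' - K * ((p \<bullet> q) / norm p)) (at 0)"
    by (intro DERIV_diff DERIV_cmult \<Phi>)
  from DERIV_local_max[OF this zero_less_one] max show ?thesis
    by simp
qed

lemma norm_penalized_max_second_deriv_le:
  fixes \<Phi> :: "real \<Rightarrow> real" and p q :: "'a::real_inner"
  assumes \<Phi>: "\<And>t. (\<Phi> has_real_derivative \<Phi>' t) (at t)"
    and \<Phi>': "(\<Phi>' has_real_derivative \<Phi>'') (at 0)"
    and p: "p \<noteq> 0" and K: "K \<ge> 0"
    and max: "\<And>t. \<Phi> t - K * norm (p + t *\<^sub>R q) \<le> \<Phi> 0 - K * norm p"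
  shows "\<Phi>'' \<le> K * (norm q)\<^sup>2 / norm p"
proof (rule tendsto_upperbound[OF second_symmetric_difference_tendsto[OF \<Phi> \<Phi>']])
  show "\<forall>\<^sub>F t in at 0. (\<Phi> t + \<Phi> (-t) - 2 * \<Phi> 0) / t\<^sup>2 \<le> K * (norm q)\<^sup>2 / norm p"
    unfolding eventually_at_filter
  proof (intro always_eventually allI impI)
    fix t :: real
    assume "t \<noteq> 0"
    have "norm (p + t *\<^sub>R q) + norm (p + (-t) *\<^sub>R q) - 2 * norm p \<le> t\<^sup>2 * ((norm q)\<^sup>2 / norm p)"
      using norm_add_scaleR_le[OF p, of t q] norm_add_scaleR_le[OF p, of "-t" q] by (simp add: field_simps)
    then have "\<Phi> t + \<Phi> (-t) - 2 * \<Phi> 0 \<le> t\<^sup>2 * (K * (norm q)\<^sup>2 / norm p)"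
      using max[of t] max[of "-t"] mult_left_mono[OF _ K] by (fastforce simp: algebra_simps)
    then show "(\<Phi> t + \<Phi> (-t) - 2 * \<Phi> 0) / t\<^sup>2 \<le> K * (norm q)\<^sup>2 / norm p"
      using \<open>t \<noteq> 0\<close> by (simp add: divide_le_eq mult.commute)
  qed
qed simp

section \<open>Derivatives along lines and the generator\<close>

lemma linear_cart_expansion:
  fixes L :: "real^'n \<Rightarrow> 'v::real_vector"
  assumes "linear L"
  shows "L a = (\<Sum>j\<in>UNIV. a$j *\<^sub>R L (axis j 1))"
proof -
  have "L a = L (\<Sum>j\<in>UNIV. a$j *\<^sub>R axis j 1)"
    using basis_expansion[of a] by (simp add: scalar_mult_eq_scaleR)
  also have "\<dots> = (\<Sum>j\<in>UNIV. a$j *\<^sub>R L (axis j 1))"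
    using assms by (simp add: real_vector.linear_sum linear_cmul)
  finally show ?thesis .
qed

definition hessian_form :: "(real^'n \<Rightarrow> 'v::real_normed_vector) \<Rightarrow> real^'n \<Rightarrow> real^'n \<Rightarrow> 'v" where
  "hessian_form \<phi> x a = (\<Sum>i\<in>UNIV. \<Sum>j\<in>UNIV. (a$i * a$j) *\<^sub>R second_partial \<phi> i j x)"

lemma has_real_derivative_inner_along_line:
  fixes \<phi> :: "real^'n \<Rightarrow> 'v::real_inner"
  assumes "\<phi> differentiable (at (x + t *\<^sub>R a))"
  shows "((\<lambda>t. e \<bullet> \<phi> (x + t *\<^sub>R a))
    has_real_derivative e \<bullet> frechet_derivative \<phi> (at (x + t *\<^sub>R a)) a) (at t)"
proof -
  let ?D = "frechet_derivative \<phi> (at (x + t *\<^sub>R a))"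
  have D: "(\<phi> has_derivative ?D) (at (x + t *\<^sub>R a))"
    using assms frechet_derivative_works by blast
  have "((\<lambda>t. x + t *\<^sub>R a) has_derivative (\<lambda>h. h *\<^sub>R a)) (at t)"
    by (auto intro!: derivative_eq_intros)
  from bounded_linear.has_derivative[OF bounded_linear_inner_right diff_chain_at[OF this D]]
  have "((\<lambda>t. e \<bullet> \<phi> (x + t *\<^sub>R a)) has_derivative (\<lambda>h. e \<bullet> ?D (h *\<^sub>R a))) (at t)"
    by (simp add: o_def)
  then show ?thesis
    unfolding has_field_derivative_def
    by (rule has_derivative_eq_rhs) (simp add: fun_eq_iff linear_cmul[OF has_derivative_linear[OF D]])
qed

lemma has_real_derivative_frechet_along_line:
  fixes \<phi> :: "real^'n \<Rightarrow> 'v::real_inner"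
  assumes "C2_fun \<phi>"
  shows "((\<lambda>t. e \<bullet> frechet_derivative \<phi> (at (x + t *\<^sub>R a)) a)
    has_real_derivative e \<bullet> hessian_form \<phi> x a) (at 0)"
proof -
  define Dj where "Dj j z = frechet_derivative \<phi> (at z) (axis j 1)" for j z
  have "\<phi> differentiable (at z)" and Dj_diff: "Dj j differentiable (at z)" for j z
    using assms unfolding C2_fun_def Dj_def by auto
  then have "linear (frechet_derivative \<phi> (at z))" "linear (frechet_derivative (Dj j) (at z))" for j z
    using has_derivative_linear frechet_derivative_works by blast+
  then have expand: "frechet_derivative \<phi> (at z) a = (\<Sum>j\<in>UNIV. a$j *\<^sub>R Dj j z)"
    "frechet_derivative (Dj j) (at z) a = (\<Sum>i\<in>UNIV. a$i *\<^sub>R frechet_derivative (Dj j) (at z) (axis i 1))"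
    for j z
    unfolding Dj_def by (blast intro: linear_cart_expansion)+
  have "second_partial \<phi> i j x = frechet_derivative (Dj j) (at x) (axis i 1)" for i j
    unfolding second_partial_def Dj_def ..
  then have "((\<lambda>t. e \<bullet> Dj j (x + t *\<^sub>R a))
      has_real_derivative (\<Sum>i\<in>UNIV. a$i * (e \<bullet> second_partial \<phi> i j x))) (at 0)" for j
    using has_real_derivative_inner_along_line[OF Dj_diff, where x=x and t=0 and a=a and e=e]
    by (simp add: expand(2) inner_sum_right)
  then have "((\<lambda>t. \<Sum>j\<in>UNIV. a$j * (e \<bullet> Dj j (x + t *\<^sub>R a))) has_real_derivative
      (\<Sum>j\<in>UNIV. a$j * (\<Sum>i\<in>UNIV. a$i * (e \<bullet> second_partial \<phi> i j x)))) (at 0)"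
    by (intro DERIV_sum DERIV_cmult)
  moreover have "(\<Sum>j\<in>UNIV. a$j * (\<Sum>i\<in>UNIV. a$i * (e \<bullet> second_partial \<phi> i j x))) = e \<bullet> hessian_form \<phi> x a"
    unfolding hessian_form_def inner_sum_right
    by (subst sum.swap) (simp add: sum_distrib_left mult_ac)
  ultimately show ?thesis
    by (simp add: expand(1) inner_sum_right)
qed

lemma generator_eq_column_sum:
  "generator \<tau> f \<phi> x =
    (1/2) *\<^sub>R (\<Sum>k\<in>UNIV. hessian_form \<phi> x (column k (\<tau> x))) + frechet_derivative \<phi> (at x) (f x)"
proof -
  have "(\<Sum>i\<in>UNIV. \<Sum>j\<in>UNIV. (\<tau> x ** transpose (\<tau> x))$i$j *\<^sub>R second_partial \<phi> i j x)
      = (\<Sum>i\<in>UNIV. \<Sum>j\<in>UNIV. \<Sum>k\<in>UNIV. (\<tau> x$i$k * \<tau> x$j$k) *\<^sub>R second_partial \<phi> i j x)"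
    by (simp add: matrix_matrix_mult_def transpose_def scaleR_sum_left)
  also have "\<dots> = (\<Sum>k\<in>UNIV. \<Sum>i\<in>UNIV. \<Sum>j\<in>UNIV. (\<tau> x$i$k * \<tau> x$j$k) *\<^sub>R second_partial \<phi> i j x)"
    by (subst sum.swap, rule sum.cong[OF refl], rule sum.swap)
  finally show ?thesis
    by (simp add: generator_def hessian_form_def column_def)
qed

section \<open>The Lyapunov function\<close>

definition lyapunov :: "nat \<Rightarrow> 'a::real_inner \<Rightarrow> real" where
  "lyapunov M x = (1 + x \<bullet> x) ^ (M + 2)"

definition lyapunov_deriv :: "nat \<Rightarrow> 'a::real_inner \<Rightarrow> 'a \<Rightarrow> real" where
  "lyapunov_deriv M x a = real (M + 2) * (1 + x \<bullet> x) ^ (M + 1) * (2 * (x \<bullet> a))"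

definition lyapunov_hessian_form :: "nat \<Rightarrow> 'a::real_inner \<Rightarrow> 'a \<Rightarrow> real" where
  "lyapunov_hessian_form M x a =
     real (M + 2) * real (M + 1) * (1 + x \<bullet> x) ^ M * (2 * (x \<bullet> a))\<^sup>2
     + real (M + 2) * (1 + x \<bullet> x) ^ (M + 1) * (2 * (a \<bullet> a))"

definition lyapunov_generator ::
  "nat \<Rightarrow> (real^'n \<Rightarrow> real^'l^'n) \<Rightarrow> (real^'n \<Rightarrow> real^'n) \<Rightarrow> real^'n \<Rightarrow> real" where
  "lyapunov_generator M \<tau> f x =
     1/2 * (\<Sum>k\<in>UNIV. lyapunov_hessian_form M x (column k (\<tau> x))) + lyapunov_deriv M x (f x)"

lemma lyapunov_nonneg: "0 \<le> lyapunov M x"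
  by (simp add: lyapunov_def)

lemma inner_add_scaleR_self:
  fixes x a :: "'a::real_inner"
  shows "(x + t *\<^sub>R a) \<bullet> (x + t *\<^sub>R a) = x \<bullet> x + 2 * t * (x \<bullet> a) + t\<^sup>2 * (a \<bullet> a)"
  by (simp add: inner_add_left inner_add_right inner_commute[of a x] power2_eq_square algebra_simps)

lemma lyapunov_base_has_real_derivative_along_line:
  fixes x a :: "'a::real_inner"
  shows "((\<lambda>t. 1 + (x + t *\<^sub>R a) \<bullet> (x + t *\<^sub>R a)) has_real_derivative 2 * ((x + t *\<^sub>R a) \<bullet> a)) (at t)"
  unfolding inner_add_scaleR_self
  by (auto intro!: derivative_eq_intros simp: inner_add_left algebra_simps power2_eq_square)

lemma lyapunov_has_real_derivative_along_line:
  "((\<lambda>t. lyapunov M (x + t *\<^sub>R a)) has_real_derivative lyapunov_deriv M (x + t *\<^sub>R a) a) (at t)"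
  unfolding lyapunov_def lyapunov_deriv_def
  by (rule DERIV_cong[OF DERIV_power[OF lyapunov_base_has_real_derivative_along_line]]) simp

lemma lyapunov_deriv_has_real_derivative_along_line:
  "((\<lambda>t. lyapunov_deriv M (x + t *\<^sub>R a) a) has_real_derivative lyapunov_hessian_form M x a) (at 0)"
proof -
  have pow: "((\<lambda>t. (1 + (x + t *\<^sub>R a) \<bullet> (x + t *\<^sub>R a)) ^ (M + 1)) has_real_derivative
      real (M + 1) * (2 * (x \<bullet> a)) * (1 + x \<bullet> x) ^ M) (at 0)"
    by (rule DERIV_cong[OF DERIV_power[OF lyapunov_base_has_real_derivative_along_line]]) simp
  have lin: "((\<lambda>t. 2 * ((x + t *\<^sub>R a) \<bullet> a)) has_real_derivative 2 * (a \<bullet> a)) (at 0)"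
    by (auto intro!: derivative_eq_intros simp: inner_add_left)
  have "((\<lambda>t. real (M + 2) * ((1 + (x + t *\<^sub>R a) \<bullet> (x + t *\<^sub>R a)) ^ (M + 1) * (2 * ((x + t *\<^sub>R a) \<bullet> a))))
      has_real_derivative real (M + 2) * (real (M + 1) * (2 * (x \<bullet> a)) * (1 + x \<bullet> x) ^ M * (2 * (x \<bullet> a))
        + (1 + x \<bullet> x) ^ (M + 1) * (2 * (a \<bullet> a)))) (at 0)"
    by (rule DERIV_cmult, rule DERIV_cong[OF DERIV_mult[OF pow lin]]) simp
  then show ?thesis
    unfolding lyapunov_deriv_def lyapunov_hessian_form_def
    by (simp add: power2_eq_square algebra_simps)
qed

lemma sum_norm_column_power2: "(\<Sum>k\<in>UNIV. (norm (column k A))\<^sup>2) = (norm (A :: real^'l^'n))\<^sup>2"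
proof -
  have "(\<Sum>k\<in>UNIV. (norm (column k A))\<^sup>2) = (\<Sum>k\<in>UNIV. \<Sum>i\<in>UNIV. A$i$k * A$i$k)"
    by (simp add: power2_norm_eq_inner inner_vec_def column_def)
  also have "\<dots> = (\<Sum>i\<in>UNIV. \<Sum>k\<in>UNIV. A$i$k * A$i$k)"
    by (rule sum.swap)
  also have "\<dots> = (norm A)\<^sup>2"
    by (simp add: power2_norm_eq_inner inner_vec_def)
  finally show ?thesis .
qed

lemma lyapunov_hessian_form_le:
  "lyapunov_hessian_form M x a \<le> 2 * real (M + 2) * (2 * real M + 3) * (1 + (norm x)\<^sup>2) ^ (M + 1) * (norm a)\<^sup>2"
proof -
  define r where "r = 1 + (norm x)\<^sup>2"
  have r: "r \<ge> 1"
    by (simp add: r_def)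
  have "(x \<bullet> a)\<^sup>2 \<le> (norm x)\<^sup>2 * (norm a)\<^sup>2"
    using Cauchy_Schwarz_ineq[of x a] by (simp add: power2_norm_eq_inner)
  also have "\<dots> \<le> r * (norm a)\<^sup>2"
    by (intro mult_right_mono) (simp_all add: r_def)
  finally have "(x \<bullet> a)\<^sup>2 \<le> r * (norm a)\<^sup>2" .
  then have "r ^ M * (x \<bullet> a)\<^sup>2 \<le> r ^ (M + 1) * (norm a)\<^sup>2"
    using mult_left_mono[of _ _ "r ^ M"] r by (simp add: mult.assoc)
  then have "real (M + 2) * real (M + 1) * (4 * (r ^ M * (x \<bullet> a)\<^sup>2))
      \<le> real (M + 2) * real (M + 1) * (4 * (r ^ (M + 1) * (norm a)\<^sup>2))"
    by (intro mult_left_mono) auto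
  moreover have "lyapunov_hessian_form M x a
      = real (M + 2) * real (M + 1) * (4 * (r ^ M * (x \<bullet> a)\<^sup>2)) + 2 * real (M + 2) * r ^ (M + 1) * (norm a)\<^sup>2"
    by (simp add: lyapunov_hessian_form_def r_def power_mult_distrib power2_norm_eq_inner)
  moreover have "2 * real (M + 2) * (2 * real M + 3) * r ^ (M + 1) * (norm a)\<^sup>2
      = real (M + 2) * real (M + 1) * (4 * (r ^ (M + 1) * (norm a)\<^sup>2)) + 2 * real (M + 2) * r ^ (M + 1) * (norm a)\<^sup>2"
    by (simp add: algebra_simps)
  ultimately show ?thesis
    unfolding r_def by linarith
qed

lemma lyapunov_generator_le:
  fixes \<tau> :: "real^'n \<Rightarrow> real^'l^'n" and f :: "real^'n \<Rightarrow> real^'n"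
  assumes T: "norm (\<tau> x) \<le> T"
    and drift: "x \<bullet> f x \<le> - Cf * (norm x)\<^sup>2 + F0 * norm x"
  shows "lyapunov_generator M \<tau> f x
    \<le> real (M + 2) * (1 + (norm x)\<^sup>2) ^ (M + 1) * ((2 * real M + 3) * T\<^sup>2 + 2 * F0 * norm x - 2 * Cf * (norm x)\<^sup>2)"
proof -
  define w where "w = real (M + 2) * (1 + (norm x)\<^sup>2) ^ (M + 1)"
  have w: "w \<ge> 0"
    by (simp add: w_def)
  have "lyapunov_hessian_form M x a \<le> 2 * w * (2 * real M + 3) * (norm a)\<^sup>2" for a
    using lyapunov_hessian_form_le[of M x a] by (simp add: w_def algebra_simps)
  then have "1/2 * (\<Sum>k\<in>UNIV. lyapunov_hessian_form M x (column k (\<tau> x)))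
      \<le> 1/2 * (\<Sum>k\<in>UNIV. 2 * w * (2 * real M + 3) * (norm (column k (\<tau> x)))\<^sup>2)"
    by (intro mult_left_mono sum_mono) simp_all
  also have "\<dots> = w * ((2 * real M + 3) * (norm (\<tau> x))\<^sup>2)"
    by (simp add: sum_distrib_left[symmetric] sum_norm_column_power2)
  also have "\<dots> \<le> w * ((2 * real M + 3) * T\<^sup>2)"
    using T w by (intro mult_left_mono power_mono) auto
  finally have diffusion: "1/2 * (\<Sum>k\<in>UNIV. lyapunov_hessian_form M x (column k (\<tau> x))) \<le> w * ((2 * real M + 3) * T\<^sup>2)" .
  have "lyapunov_deriv M x (f x) = w * (2 * (x \<bullet> f x))"
    by (simp add: lyapunov_deriv_def w_def power2_norm_eq_inner)
  also have "\<dots> \<le> w * (2 * F0 * norm x - 2 * Cf * (norm x)\<^sup>2)"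
    using drift w by (intro mult_left_mono) auto
  finally show ?thesis
    using diffusion unfolding lyapunov_generator_def w_def[symmetric] by (simp add: algebra_simps)
qed

lemma concave_quadratic_le_neg:
  fixes c2 c3 c4 s Z :: real
  assumes c: "0 \<le> c2" "0 \<le> c3" "0 < c4" and "0 \<le> Z" and s: "1 \<le> s" "(c2 + c3 + Z) / c4 \<le> s"
  shows "c2 + c3 * s - c4 * s\<^sup>2 \<le> - Z"
proof -
  have "(c2 + Z) * 1 \<le> (c2 + Z) * s"
    using assms by (intro mult_left_mono) auto
  then have "c2 + c3 * s + Z \<le> (c2 + c3 + Z) * s"
    by (simp add: algebra_simps)
  also have "\<dots> \<le> c4 * s * s"
    using assms by (intro mult_right_mono) (simp_all add: divide_le_eq mult.commute)
  finally show ?thesis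
    by (simp add: power2_eq_square)
qed

lemma weighted_concave_quadratic_bounded_above:
  fixes w :: "real \<Rightarrow> real" and c2 c3 c4 :: real
  assumes w_ge_1: "\<And>s. 0 \<le> s \<Longrightarrow> 1 \<le> w s"
    and w_mono: "\<And>s t. 0 \<le> s \<Longrightarrow> s \<le> t \<Longrightarrow> w s \<le> w t"
    and c: "0 \<le> c2" "0 \<le> c3" "0 < c4"
  obtains C where "0 \<le> C" and "\<And>s. 0 \<le> s \<Longrightarrow> w s * (c2 + c3 * s - c4 * s\<^sup>2) \<le> C"
proof
  define s1 where "s1 = max 1 ((c2 + c3) / c4)"
  have s1: "1 \<le> s1"
    by (simp add: s1_def)
  show C: "0 \<le> w s1 * (c2 + c3 * s1)"
    using w_ge_1[of s1] s1 c by (intro mult_nonneg_nonneg) auto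
  fix s :: real
  assume s: "0 \<le> s"
  show "w s * (c2 + c3 * s - c4 * s\<^sup>2) \<le> w s1 * (c2 + c3 * s1)"
  proof (cases "c2 + c3 * s - c4 * s\<^sup>2 \<le> 0")
    case True
    then have "w s * (c2 + c3 * s - c4 * s\<^sup>2) \<le> 0"
      using w_ge_1[OF s] by (simp add: mult_nonneg_nonpos)
    then show ?thesis
      using C by linarith
  next
    case False
    then have "s \<le> s1"
      using concave_quadratic_le_neg[OF c order_refl, of s] by (force simp: s1_def)
    moreover have "0 \<le> c4 * s\<^sup>2"
      using c by simp
    ultimately have "c2 + c3 * s - c4 * s\<^sup>2 \<le> c2 + c3 * s1"
      using c mult_left_mono[OF \<open>s \<le> s1\<close>, of c3] by linarith
    then show ?thesis
      using False s s1 w_mono[OF s \<open>s \<le> s1\<close>] w_ge_1[OF s] by (intro mult_mono) auto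
  qed
qed

lemma weighted_concave_quadratic_bounds:
  fixes w :: "real \<Rightarrow> real" and c2 c3 c4 :: real
  assumes w_ge_1: "\<And>s. 0 \<le> s \<Longrightarrow> 1 \<le> w s"
    and w_mono: "\<And>s t. 0 \<le> s \<Longrightarrow> s \<le> t \<Longrightarrow> w s \<le> w t"
    and c: "0 \<le> c2" "0 \<le> c3" "0 < c4"
  obtains C R where "\<And>s. 0 \<le> s \<Longrightarrow> w s * (c2 + c3 * s - c4 * s\<^sup>2) \<le> C"
    and "\<And>s. 0 \<le> s \<Longrightarrow> - C \<le> w s * (c2 + c3 * s - c4 * s\<^sup>2) \<Longrightarrow> s \<le> R"
proof -
  obtain C where C: "0 \<le> C" and upper: "\<And>s. 0 \<le> s \<Longrightarrow> w s * (c2 + c3 * s - c4 * s\<^sup>2) \<le> C"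
    using weighted_concave_quadratic_bounded_above[of w, OF w_ge_1 w_mono c] by blast
  define R where "R = max 1 ((c2 + c3 + (C + 1)) / c4)"
  define q where "q s = c2 + c3 * s - c4 * s\<^sup>2" for s
  have "s \<le> R" if s: "0 \<le> s" and ge: "- C \<le> w s * q s" for s
  proof (rule ccontr)
    assume "\<not> s \<le> R"
    then have q: "q s \<le> - (C + 1)"
      using concave_quadratic_le_neg[OF c, of "C + 1" s] C by (simp add: R_def q_def)
    then have "w s * q s \<le> 1 * q s"
      using w_ge_1[OF s] C by (intro mult_right_mono_neg) simp_all
    then show False
      using ge q by linarith
  qed
  then show ?thesis
    using that upper unfolding q_def by blast
qed

lemma lyapunov_generator_sum_nonneg_imp_bounded:
  fixes \<tau> :: "real^'n \<Rightarrow> real^'l^'n" and f :: "real^'n \<Rightarrow> real^'n"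
  assumes T: "\<And>x. norm (\<tau> x) \<le> T"
    and drift: "\<And>x. x \<bullet> f x \<le> - Cf * (norm x)\<^sup>2 + F0 * norm x"
    and Cf: "0 < Cf" and F0: "0 \<le> F0"
  obtains R where "\<And>x y. 0 \<le> lyapunov_generator M \<tau> f x + lyapunov_generator M \<tau> f y \<Longrightarrow> norm x \<le> R"
proof -
  define w where "w s = real (M + 2) * (1 + s\<^sup>2) ^ (M + 1)" for s :: real
  have w_ge_1: "1 * 1 \<le> w s" for s
    unfolding w_def by (intro mult_mono one_le_power) auto
  have w_mono: "w s \<le> w t" if "0 \<le> s" "s \<le> t" for s t
    using that unfolding w_def by (intro mult_left_mono power_mono add_left_mono) (auto intro: power_mono)
  obtain C R where
    upper: "\<And>s. 0 \<le> s \<Longrightarrow> w s * ((2 * real M + 3) * T\<^sup>2 + 2 * F0 * s - 2 * Cf * s\<^sup>2) \<le> C" and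
    bounded: "\<And>s. 0 \<le> s \<Longrightarrow> - C \<le> w s * ((2 * real M + 3) * T\<^sup>2 + 2 * F0 * s - 2 * Cf * s\<^sup>2) \<Longrightarrow> s \<le> R"
    by (rule weighted_concave_quadratic_bounds[of w "(2 * real M + 3) * T\<^sup>2" "2 * F0" "2 * Cf"])
      (use w_ge_1 w_mono Cf F0 in auto)
  have LV: "lyapunov_generator M \<tau> f x \<le> w (norm x) * ((2 * real M + 3) * T\<^sup>2 + 2 * F0 * norm x - 2 * Cf * (norm x)\<^sup>2)" for x
    unfolding w_def by (rule lyapunov_generator_le[OF T drift])
  show ?thesis
  proof (rule that)
    fix x y
    assume "0 \<le> lyapunov_generator M \<tau> f x + lyapunov_generator M \<tau> f y"
    then show "norm x \<le> R"
      using LV[of x] LV[of y] upper[of "norm y"] by (intro bounded) auto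
  qed
qed

lemma poly_growth_minus_lyapunov_coercive:
  fixes \<Psi> :: "'a::real_inner \<Rightarrow> 'v::real_normed_vector"
  assumes growth: "\<And>y. norm (\<Psi> y) \<le> C * (1 + norm y) ^ M" and \<delta>: "0 < \<delta>" and Z: "0 \<le> Z"
  obtains R where "\<And>x. R \<le> norm x \<Longrightarrow> norm (\<Psi> x) - \<delta> * lyapunov M x \<le> - Z"
proof
  fix x :: 'a
  assume x: "(C * 2 ^ M + Z) / \<delta> \<le> norm x"
  define s r where "s = norm x" and "r = 1 + s\<^sup>2"
  have s: "0 \<le> s" and r: "1 \<le> r"
    by (simp_all add: s_def r_def)
  have "2 * s \<le> r"
    using zero_le_power2[of "s - 1"] by (simp add: r_def power2_eq_square algebra_simps)
  then have s_le_r: "s \<le> r" and "1 + s \<le> 2 * r"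
    using s r by linarith+
  have C: "0 \<le> C"
    using order_trans[OF norm_ge_zero growth[of 0]] by simp
  have "norm (\<Psi> x) \<le> C * (2 * r) ^ M"
    using growth[of x] C \<open>1 + s \<le> 2 * r\<close> s
    by (metis s_def mult_left_mono power_mono add_nonneg_nonneg zero_le_one order_trans)
  also have "\<dots> = r ^ M * (C * 2 ^ M)"
    by (simp add: power_mult_distrib)
  finally have \<Psi>_le: "norm (\<Psi> x) \<le> r ^ M * (C * 2 ^ M)" .
  have "C * 2 ^ M + Z \<le> \<delta> * s"
    using x \<delta> by (simp add: s_def pos_divide_le_eq mult.commute)
  also have "\<dots> \<le> \<delta> * r\<^sup>2"
    using s_le_r r \<delta> by (intro mult_left_mono) (auto simp: power2_eq_square intro: order_trans[OF _ mult_right_mono[of 1 r r]])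
  finally have "r ^ M * (C * 2 ^ M + Z) \<le> r ^ M * (\<delta> * r\<^sup>2)"
    using r by (intro mult_left_mono) simp_all
  also have "\<dots> = \<delta> * lyapunov M x"
  proof -
    have "r = 1 + x \<bullet> x"
      by (simp add: r_def s_def power2_norm_eq_inner)
    then show ?thesis
      by (simp add: lyapunov_def power_add power2_eq_square mult_ac)
  qed
  finally have "r ^ M * (C * 2 ^ M + Z) \<le> \<delta> * lyapunov M x" .
  moreover have "Z \<le> r ^ M * Z"
    using r Z by (simp add: one_le_power mult_le_cancel_right1)
  ultimately show "norm (\<Psi> x) - \<delta> * lyapunov M x \<le> - Z"
    using \<Psi>_le by (simp add: algebra_simps)
qed

section \<open>Lipschitz bounds and dissipativity\<close>

lemma C1b_fun_frechet_derivative: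
  fixes g :: "real^'n \<Rightarrow> 'v::real_normed_vector"
  assumes "C1b_fun g"
  shows "(g has_derivative frechet_derivative g (at y)) (at y)"
    and "onorm (frechet_derivative g (at y)) \<le> sup_deriv_norm g"
proof -
  obtain g' where g': "\<And>y. (g has_derivative blinfun_apply (g' y)) (at y)" and "bounded (range g')"
    using assms unfolding C1b_fun_def by blast
  then obtain B where B: "\<And>z. norm (g' z) \<le> B"
    unfolding bounded_iff by auto
  have D: "frechet_derivative g (at z) = blinfun_apply (g' z)" for z
    using frechet_derivative_at[OF g'[of z]] by simp
  show "(g has_derivative frechet_derivative g (at y)) (at y)"
    using g'[of y] unfolding D .
  have "bdd_above (range (\<lambda>z. onorm (frechet_derivative g (at z))))"
    using B unfolding D norm_blinfun.rep_eq[symmetric] by (auto intro!: bdd_aboveI)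
  then show "onorm (frechet_derivative g (at y)) \<le> sup_deriv_norm g"
    unfolding sup_deriv_norm_def by (rule cSUP_upper[OF UNIV_I])
qed

lemma C1b_fun_lipschitz:
  fixes g :: "real^'n \<Rightarrow> 'v::real_normed_vector"
  assumes "C1b_fun g"
  shows "(sup_deriv_norm g)-lipschitz_on UNIV g"
proof (rule bounded_derivative_imp_lipschitz)
  show "(g has_derivative frechet_derivative g (at x)) (at x within UNIV)" for x
    using C1b_fun_frechet_derivative(1)[OF assms] by simp
  show "onorm (frechet_derivative g (at x)) \<le> sup_deriv_norm g" for x
    using C1b_fun_frechet_derivative(2)[OF assms] .
  have "0 \<le> onorm (frechet_derivative g (at 0))"
    by (rule onorm_pos_le[OF has_derivative_bounded_linear[OF C1b_fun_frechet_derivative(1)[OF assms]]])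
  then show "0 \<le> sup_deriv_norm g"
    using C1b_fun_frechet_derivative(2)[OF assms] by (rule order_trans)
qed simp

lemma bounded_blinfun_derivative_imp_lipschitz:
  fixes g :: "real^'n \<Rightarrow> 'v::real_normed_vector"
  assumes "\<And>y. (g has_derivative blinfun_apply (g' y)) (at y)" and "bounded (range g')"
  obtains L where "L-lipschitz_on UNIV g"
proof -
  obtain B where B: "\<And>z. norm (g' z) \<le> B"
    using assms(2) unfolding bounded_iff by auto
  have "0 \<le> B"
    using B[of 0] norm_ge_zero[of "g' 0"] by linarith
  then have "B-lipschitz_on UNIV g"
    using assms(1) B by (intro bounded_derivative_imp_lipschitz) (auto simp: norm_blinfun.rep_eq[symmetric])
  then show ?thesis ..
qed

lemma C2_fun_lipschitz_on_compact_convex: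
  fixes \<Psi> :: "real^'n \<Rightarrow> 'v::real_normed_vector"
  assumes C2: "C2_fun \<Psi>" and "compact S" "convex S"
  obtains L where "L-lipschitz_on S \<Psi>"
proof -
  define Dj where "Dj j z = frechet_derivative \<Psi> (at z) (axis j 1)" for j z
  have diff: "\<Psi> differentiable (at z)" and "Dj j differentiable (at z)" for j z
    using C2 unfolding C2_fun_def Dj_def by auto
  then have "continuous_on S (Dj j)" for j
    by (meson continuous_at_imp_continuous_on differentiable_imp_continuous_within)
  then have "continuous_on S (\<lambda>z. \<Sum>j\<in>UNIV. norm (Dj j z))"
    by (intro continuous_intros)
  then have "bounded ((\<lambda>z. \<Sum>j\<in>UNIV. norm (Dj j z)) ` S)"
    using compact_continuous_image[OF _ \<open>compact S\<close>] compact_imp_bounded by blast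
  then obtain B where "\<forall>z\<in>S. norm (\<Sum>j\<in>UNIV. norm (Dj j z)) \<le> B"
    unfolding bounded_iff by blast
  then have B: "(\<Sum>j\<in>UNIV. norm (Dj j z)) \<le> B" if "z \<in> S" for z
    using that by fastforce
  have onorm_le: "onorm (frechet_derivative \<Psi> (at z)) \<le> max B 0" if "z \<in> S" for z
  proof (rule onorm_le)
    fix v :: "real^'n"
    have "linear (frechet_derivative \<Psi> (at z))"
      using diff frechet_derivative_works has_derivative_linear by blast
    then have "norm (frechet_derivative \<Psi> (at z) v) = norm (\<Sum>j\<in>UNIV. v$j *\<^sub>R Dj j z)"
      unfolding Dj_def by (subst linear_cart_expansion) auto
    also have "\<dots> \<le> (\<Sum>j\<in>UNIV. norm v * norm (Dj j z))"
      by (intro sum_norm_le) (auto intro!: mult_right_mono component_le_norm_cart)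
    also have "\<dots> \<le> max B 0 * norm v"
      using B[OF that] by (simp add: sum_distrib_left[symmetric] mult.commute mult_left_mono)
    finally show "norm (frechet_derivative \<Psi> (at z) v) \<le> max B 0 * norm v" .
  qed
  have "(max B 0)-lipschitz_on S \<Psi>"
    using diff frechet_derivative_works onorm_le \<open>convex S\<close>
    by (intro bounded_derivative_imp_lipschitz) (auto intro: has_derivative_at_withinI)
  then show ?thesis ..
qed

lemma linear_plus_lipschitz_dissipative:
  fixes \<Gamma> :: "real^'n^'n" and \<zeta> f :: "real^'n \<Rightarrow> real^'n"
  assumes f: "\<And>y. f y = - (\<Gamma> *v y) + \<zeta> y" and \<zeta>: "L-lipschitz_on UNIV \<zeta>"
    and coercive: "\<And>y. Cf * (norm y)\<^sup>2 \<le> ((\<Gamma> - L *\<^sub>R mat 1) *v y) \<bullet> y"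
  shows "(f x - f y) \<bullet> (x - y) \<le> - Cf * (norm (x - y))\<^sup>2"
proof -
  define z where "z = x - y"
  have "(\<zeta> x - \<zeta> y) \<bullet> z \<le> norm (\<zeta> x - \<zeta> y) * norm z"
    by (rule norm_cauchy_schwarz)
  also have "\<dots> \<le> L * norm z * norm z"
    using lipschitz_onD[OF \<zeta> UNIV_I UNIV_I, of x y] by (intro mult_right_mono) (simp_all add: dist_norm z_def)
  finally have "(\<zeta> x - \<zeta> y) \<bullet> z \<le> L * (z \<bullet> z)"
    by (simp add: dot_square_norm power2_eq_square mult.assoc)
  moreover have "(L *\<^sub>R mat 1) *v z = L *\<^sub>R (mat 1 *v z)"
    by (simp add: matrix_vector_mult_def vec_eq_iff sum_distrib_left mult.assoc)
  then have "Cf * (norm z)\<^sup>2 \<le> (\<Gamma> *v z) \<bullet> z - L * (z \<bullet> z)"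
    using coercive[of z] by (simp add: matrix_vector_mult_diff_rdistrib inner_diff_left matrix_vector_mul_lid)
  moreover have "(f x - f y) \<bullet> z = - ((\<Gamma> *v z) \<bullet> z) + (\<zeta> x - \<zeta> y) \<bullet> z"
    by (simp add: f z_def matrix_vector_mult_diff_distrib inner_diff_left algebra_simps)
  ultimately show ?thesis
    unfolding z_def by linarith
qed

lemma dissipative_inner_le:
  fixes f :: "'a::real_inner \<Rightarrow> 'a"
  assumes "\<And>x y. (f x - f y) \<bullet> (x - y) \<le> - Cf * (norm (x - y))\<^sup>2"
  shows "x \<bullet> f x \<le> - Cf * (norm x)\<^sup>2 + norm (f 0) * norm x"
proof -
  have "x \<bullet> f x = (f x - f 0) \<bullet> (x - 0) + f 0 \<bullet> x"
    by (simp add: inner_diff_left inner_commute[of x])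
  then show ?thesis
    using assms[of x 0] norm_cauchy_schwarz[of "f 0" x] by simp
qed

lemma lipschitz_on_UNIV_imp_onorm_frechet_derivative_le:
  fixes g :: "real^'n \<Rightarrow> 'v::real_inner"
  assumes lip: "K-lipschitz_on UNIV g" and diff: "g differentiable (at y)"
  shows "onorm (frechet_derivative g (at y)) \<le> K"
proof (rule onorm_le)
  fix v :: "real^'n"
  define w where "w = frechet_derivative g (at y) v"
  have "((\<lambda>t. w \<bullet> g (y + t *\<^sub>R v)) has_real_derivative w \<bullet> w) (at 0)"
    using has_real_derivative_inner_along_line[of g y 0 v w] diff by (simp add: w_def)
  then have "((\<lambda>t. (w \<bullet> g (y + t *\<^sub>R v) - w \<bullet> g y) / t) \<longlongrightarrow> w \<bullet> w) (at 0)"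
    by (simp add: DERIV_def)
  moreover have "\<forall>\<^sub>F t in at 0. (w \<bullet> g (y + t *\<^sub>R v) - w \<bullet> g y) / t \<le> norm w * (K * norm v)"
    unfolding eventually_at_filter
  proof (intro always_eventually allI impI)
    fix t :: real
    assume "t \<noteq> 0"
    have "\<bar>w \<bullet> (g (y + t *\<^sub>R v) - g y)\<bar> \<le> norm w * norm (g (y + t *\<^sub>R v) - g y)"
      by (rule Cauchy_Schwarz_ineq2)
    also have "\<dots> \<le> norm w * (K * (\<bar>t\<bar> * norm v))"
      using lipschitz_onD[OF lip UNIV_I UNIV_I, of "y + t *\<^sub>R v" y] by (intro mult_left_mono) (simp_all add: dist_norm)
    finally have "\<bar>(w \<bullet> g (y + t *\<^sub>R v) - w \<bullet> g y) / t\<bar> \<le> norm w * (K * norm v)"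
      using \<open>t \<noteq> 0\<close> by (simp add: inner_diff_right abs_divide divide_le_eq mult_ac)
    then show "(w \<bullet> g (y + t *\<^sub>R v) - w \<bullet> g y) / t \<le> norm w * (K * norm v)"
      by (rule abs_le_D1)
  qed
  ultimately have "norm w * norm w \<le> norm w * (K * norm v)"
    by (simp add: tendsto_upperbound dot_square_norm power2_eq_square)
  moreover have "0 \<le> K * norm v"
    using lipschitz_on_nonneg[OF lip] by simp
  ultimately show "norm (frechet_derivative g (at y) v) \<le> K * norm v"
    unfolding w_def by (cases "frechet_derivative g (at y) v = 0") simp_all
qed

lemma lipschitz_on_UNIV_if_inner_le:
  fixes g :: "'a::real_normed_vector \<Rightarrow> 'v::real_inner"
  assumes inner_le: "\<And>e x y. norm e \<le> 1 \<Longrightarrow> e \<bullet> (g x - g y) \<le> K * norm (x - y)" and K: "0 \<le> K"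
  shows "K-lipschitz_on UNIV g"
proof (rule lipschitz_onI)
  fix x y :: 'a
  show "dist (g x) (g y) \<le> K * dist x y"
  proof (cases "g x = g y")
    case True
    then show ?thesis
      using K by simp
  next
    case False
    have "norm (g x - g y) = ((g x - g y) /\<^sub>R norm (g x - g y)) \<bullet> (g x - g y)"
      using False by (simp add: dot_square_norm power2_eq_square)
    also have "\<dots> \<le> K * norm (x - y)"
      using False by (intro inner_le) simp
    finally show ?thesis
      by (simp add: dist_norm)
  qed
qed (fact K)

lemma le_if_le_add_pos_mult:
  fixes a b c :: real
  assumes "\<And>\<delta>. 0 < \<delta> \<Longrightarrow> a \<le> b + \<delta> * c"
  shows "a \<le> b"
proof (rule tendsto_lowerbound)
  show "((\<lambda>\<delta>. b + \<delta> * c) \<longlongrightarrow> b) (at_right 0)"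
    by (auto intro!: tendsto_eq_intros)
  show "\<forall>\<^sub>F \<delta> in at_right 0. a \<le> b + \<delta> * c"
    using assms by (rule eventually_mono[OF eventually_at_right_less])
qed simp

section \<open>Doubling of variables\<close>

definition doubling ::
  "'v::real_inner \<Rightarrow> (real^'n \<Rightarrow> 'v) \<Rightarrow> real \<Rightarrow> real \<Rightarrow> nat \<Rightarrow> real^'n \<Rightarrow> real^'n \<Rightarrow> real" where
  "doubling e \<Psi> K \<delta> M x y = e \<bullet> (\<Psi> x - \<Psi> y) - K * norm (x - y) - \<delta> * (lyapunov M x + lyapunov M y)"

lemma doubling_max_along_lines:
  assumes "\<And>x y. doubling e \<Psi> K \<delta> M x y \<le> doubling e \<Psi> K \<delta> M x0 y0"
  shows "(e \<bullet> \<Psi> (x0 + t *\<^sub>R a) - e \<bullet> \<Psi> (y0 + t *\<^sub>R c) - \<delta> * (lyapunov M (x0 + t *\<^sub>R a) + lyapunov M (y0 + t *\<^sub>R c)))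
      - K * norm ((x0 - y0) + t *\<^sub>R (a - c))
    \<le> (e \<bullet> \<Psi> (x0 + 0 *\<^sub>R a) - e \<bullet> \<Psi> (y0 + 0 *\<^sub>R c) - \<delta> * (lyapunov M (x0 + 0 *\<^sub>R a) + lyapunov M (y0 + 0 *\<^sub>R c)))
      - K * norm (x0 - y0)"
proof -
  have eq: "(x0 + t *\<^sub>R a) - (y0 + t *\<^sub>R c) = (x0 - y0) + t *\<^sub>R (a - c)"
    by (simp add: algebra_simps)
  from assms[of "x0 + t *\<^sub>R a" "y0 + t *\<^sub>R c"] show ?thesis
    unfolding doubling_def inner_diff_right eq scaleR_zero_left add_0_right by linarith
qed

lemma doubling_max_first_order:
  fixes \<Psi> :: "real^'n \<Rightarrow> 'v::real_inner"
  assumes "\<And>z. \<Psi> differentiable (at z)"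
    and max: "\<And>x y. doubling e \<Psi> K \<delta> M x y \<le> doubling e \<Psi> K \<delta> M x0 y0" and "x0 \<noteq> y0"
  shows "e \<bullet> frechet_derivative \<Psi> (at x0) u - e \<bullet> frechet_derivative \<Psi> (at y0) v
      - \<delta> * (lyapunov_deriv M x0 u + lyapunov_deriv M y0 v) = K * ((x0 - y0) \<bullet> (u - v)) / norm (x0 - y0)"
proof (rule norm_penalized_max_deriv_eq[OF _ _ doubling_max_along_lines[OF max]])
  show "x0 - y0 \<noteq> 0"
    using \<open>x0 \<noteq> y0\<close> by simp
  show "((\<lambda>t. e \<bullet> \<Psi> (x0 + t *\<^sub>R u) - e \<bullet> \<Psi> (y0 + t *\<^sub>R v) - \<delta> * (lyapunov M (x0 + t *\<^sub>R u) + lyapunov M (y0 + t *\<^sub>R v)))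
      has_real_derivative e \<bullet> frechet_derivative \<Psi> (at x0) u - e \<bullet> frechet_derivative \<Psi> (at y0) v
        - \<delta> * (lyapunov_deriv M x0 u + lyapunov_deriv M y0 v)) (at 0)"
    by (auto intro!: derivative_eq_intros has_real_derivative_inner_along_line[OF assms(1)]
        lyapunov_has_real_derivative_along_line)
qed

lemma doubling_max_second_order:
  fixes \<Psi> :: "real^'n \<Rightarrow> 'v::real_inner"
  assumes C2: "C2_fun \<Psi>"
    and max: "\<And>x y. doubling e \<Psi> K \<delta> M x y \<le> doubling e \<Psi> K \<delta> M x0 y0" and "x0 \<noteq> y0" and "0 \<le> K"
  shows "e \<bullet> hessian_form \<Psi> x0 a - e \<bullet> hessian_form \<Psi> y0 c
      - \<delta> * (lyapunov_hessian_form M x0 a + lyapunov_hessian_form M y0 c) \<le> K * (norm (a - c))\<^sup>2 / norm (x0 - y0)"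
proof (rule norm_penalized_max_second_deriv_le[OF _ _ _ \<open>0 \<le> K\<close> doubling_max_along_lines[OF max]])
  have diff: "\<And>z. \<Psi> differentiable (at z)"
    using C2 by (simp add: C2_fun_def)
  show "x0 - y0 \<noteq> 0"
    using \<open>x0 \<noteq> y0\<close> by simp
  show "((\<lambda>t. e \<bullet> \<Psi> (x0 + t *\<^sub>R a) - e \<bullet> \<Psi> (y0 + t *\<^sub>R c) - \<delta> * (lyapunov M (x0 + t *\<^sub>R a) + lyapunov M (y0 + t *\<^sub>R c)))
      has_real_derivative e \<bullet> frechet_derivative \<Psi> (at (x0 + t *\<^sub>R a)) a - e \<bullet> frechet_derivative \<Psi> (at (y0 + t *\<^sub>R c)) c
        - \<delta> * (lyapunov_deriv M (x0 + t *\<^sub>R a) a + lyapunov_deriv M (y0 + t *\<^sub>R c) c)) (at t)" for t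
    by (intro DERIV_diff DERIV_cmult DERIV_add has_real_derivative_inner_along_line[OF diff]
        lyapunov_has_real_derivative_along_line)
  show "((\<lambda>t. e \<bullet> frechet_derivative \<Psi> (at (x0 + t *\<^sub>R a)) a - e \<bullet> frechet_derivative \<Psi> (at (y0 + t *\<^sub>R c)) c
        - \<delta> * (lyapunov_deriv M (x0 + t *\<^sub>R a) a + lyapunov_deriv M (y0 + t *\<^sub>R c) c))
      has_real_derivative e \<bullet> hessian_form \<Psi> x0 a - e \<bullet> hessian_form \<Psi> y0 c
        - \<delta> * (lyapunov_hessian_form M x0 a + lyapunov_hessian_form M y0 c)) (at 0)"
    by (intro DERIV_diff DERIV_cmult DERIV_add has_real_derivative_frechet_along_line[OF C2]
        lyapunov_deriv_has_real_derivative_along_line)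
qed

lemma doubling_max_noise_le:
  fixes \<tau> :: "real^'n \<Rightarrow> real^'l^'n" and \<Psi> :: "real^'n \<Rightarrow> 'v::real_inner"
  assumes C2: "C2_fun \<Psi>" and \<tau>_lip: "D-lipschitz_on UNIV \<tau>"
    and max: "\<And>x y. doubling e \<Psi> K \<delta> M x y \<le> doubling e \<Psi> K \<delta> M x0 y0" and "x0 \<noteq> y0" and K: "0 \<le> K"
  shows "(\<Sum>k\<in>UNIV. e \<bullet> hessian_form \<Psi> x0 (column k (\<tau> x0)) - e \<bullet> hessian_form \<Psi> y0 (column k (\<tau> y0)))
      - \<delta> * (\<Sum>k\<in>UNIV. lyapunov_hessian_form M x0 (column k (\<tau> x0)) + lyapunov_hessian_form M y0 (column k (\<tau> y0)))
    \<le> K * D\<^sup>2 * norm (x0 - y0)"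
proof -
  define p where "p = x0 - y0"
  have p: "0 < norm p"
    using \<open>x0 \<noteq> y0\<close> by (simp add: p_def)
  define a c where "a k = column k (\<tau> x0)" and "c k = column k (\<tau> y0)" for k
  have "e \<bullet> hessian_form \<Psi> x0 (a k) - e \<bullet> hessian_form \<Psi> y0 (c k)
      - \<delta> * (lyapunov_hessian_form M x0 (a k) + lyapunov_hessian_form M y0 (c k))
      \<le> K * (norm (a k - c k))\<^sup>2 / norm p" for k
    unfolding p_def by (rule doubling_max_second_order[OF C2 max \<open>x0 \<noteq> y0\<close> K])
  then have "(\<Sum>k\<in>UNIV. e \<bullet> hessian_form \<Psi> x0 (a k) - e \<bullet> hessian_form \<Psi> y0 (c k))
      - \<delta> * (\<Sum>k\<in>UNIV. lyapunov_hessian_form M x0 (a k) + lyapunov_hessian_form M y0 (c k))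
      \<le> (\<Sum>k\<in>UNIV. K * (norm (a k - c k))\<^sup>2 / norm p)"
    unfolding sum_distrib_left sum_subtractf[symmetric] by (rule sum_mono)
  also have "\<dots> = K * (norm (\<tau> x0 - \<tau> y0))\<^sup>2 / norm p"
  proof -
    have "a k - c k = column k (\<tau> x0 - \<tau> y0)" for k
      by (simp add: a_def c_def column_def vec_eq_iff)
    then show ?thesis
      by (simp add: sum_divide_distrib[symmetric] sum_distrib_left[symmetric] sum_norm_column_power2)
  qed
  also have "\<dots> \<le> K * (D * norm p)\<^sup>2 / norm p"
    using lipschitz_onD[OF \<tau>_lip UNIV_I UNIV_I, of x0 y0] K p
    by (intro divide_right_mono mult_left_mono power_mono) (simp_all add: p_def dist_norm)
  also have "\<dots> = K * D\<^sup>2 * norm p"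
    using p by (simp add: power2_eq_square)
  finally show ?thesis
    unfolding a_def c_def p_def .
qed

lemma doubling_max_drift_le:
  fixes f :: "real^'n \<Rightarrow> real^'n" and \<Psi> :: "real^'n \<Rightarrow> 'v::real_inner"
  assumes "\<And>z. \<Psi> differentiable (at z)"
    and f_dissipative: "\<And>x y. (f x - f y) \<bullet> (x - y) \<le> - Cf * (norm (x - y))\<^sup>2"
    and max: "\<And>x y. doubling e \<Psi> K \<delta> M x y \<le> doubling e \<Psi> K \<delta> M x0 y0" and "x0 \<noteq> y0" and K: "0 \<le> K"
  shows "e \<bullet> frechet_derivative \<Psi> (at x0) (f x0) - e \<bullet> frechet_derivative \<Psi> (at y0) (f y0)
      - \<delta> * (lyapunov_deriv M x0 (f x0) + lyapunov_deriv M y0 (f y0))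
    \<le> - K * Cf * norm (x0 - y0)"
proof -
  define p where "p = x0 - y0"
  have p: "0 < norm p"
    using \<open>x0 \<noteq> y0\<close> by (simp add: p_def)
  have "e \<bullet> frechet_derivative \<Psi> (at x0) (f x0) - e \<bullet> frechet_derivative \<Psi> (at y0) (f y0)
      - \<delta> * (lyapunov_deriv M x0 (f x0) + lyapunov_deriv M y0 (f y0))
      = K * (p \<bullet> (f x0 - f y0)) / norm p"
    unfolding p_def by (rule doubling_max_first_order[OF assms(1) max \<open>x0 \<noteq> y0\<close>])
  also have "\<dots> \<le> K * (- Cf * (norm p)\<^sup>2) / norm p"
    using f_dissipative[of x0 y0] K p
    by (intro divide_right_mono mult_left_mono) (simp_all add: p_def inner_commute)
  also have "\<dots> = - K * Cf * norm p"
    using p by (simp add: power2_eq_square)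
  finally show ?thesis
    unfolding p_def .
qed

lemma doubling_max_point_ineq:
  fixes \<tau> :: "real^'n \<Rightarrow> real^'l^'n" and f :: "real^'n \<Rightarrow> real^'n" and \<Psi> b :: "real^'n \<Rightarrow> 'v::real_inner"
  assumes C2: "C2_fun \<Psi>" and poisson: "\<And>y. generator \<tau> f \<Psi> y = - b y"
    and b_lip: "Lb-lipschitz_on UNIV b" and \<tau>_lip: "D-lipschitz_on UNIV \<tau>"
    and f_dissipative: "\<And>x y. (f x - f y) \<bullet> (x - y) \<le> - Cf * (norm (x - y))\<^sup>2"
    and e: "norm e \<le> 1" and K: "0 \<le> K"
    and max: "\<And>x y. doubling e \<Psi> K \<delta> M x y \<le> doubling e \<Psi> K \<delta> M x0 y0" and "x0 \<noteq> y0"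
  shows "(K * (Cf - D\<^sup>2 / 2) - Lb) * norm (x0 - y0)
    \<le> \<delta> * (lyapunov_generator M \<tau> f x0 + lyapunov_generator M \<tau> f y0)"
proof -
  define H where
    "H = (\<Sum>k\<in>UNIV. e \<bullet> hessian_form \<Psi> x0 (column k (\<tau> x0)) - e \<bullet> hessian_form \<Psi> y0 (column k (\<tau> y0)))"
  define HV where "HV = (\<Sum>k\<in>UNIV. lyapunov_hessian_form M x0 (column k (\<tau> x0)) + lyapunov_hessian_form M y0 (column k (\<tau> y0)))"
  define G where "G = e \<bullet> frechet_derivative \<Psi> (at x0) (f x0) - e \<bullet> frechet_derivative \<Psi> (at y0) (f y0)"
  define GV where "GV = lyapunov_deriv M x0 (f x0) + lyapunov_deriv M y0 (f y0)"
  have noise: "H - \<delta> * HV \<le> K * D\<^sup>2 * norm (x0 - y0)"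
    unfolding H_def HV_def by (rule doubling_max_noise_le[OF C2 \<tau>_lip max \<open>x0 \<noteq> y0\<close> K])
  have drift: "G - \<delta> * GV \<le> - K * Cf * norm (x0 - y0)"
    using C2 unfolding G_def GV_def C2_fun_def
    by (intro doubling_max_drift_le[OF _ f_dissipative max \<open>x0 \<noteq> y0\<close> K]) simp
  have "- (e \<bullet> b x) = e \<bullet> generator \<tau> f \<Psi> x" for x
    by (simp add: poisson)
  then have "e \<bullet> b y0 - e \<bullet> b x0 = e \<bullet> generator \<tau> f \<Psi> x0 - e \<bullet> generator \<tau> f \<Psi> y0"
    by (metis diff_minus_eq_add minus_diff_eq uminus_add_conv_diff)
  also have "\<dots> = 1/2 * H + G"
    unfolding generator_eq_column_sum H_def G_def inner_add_right inner_scaleR_right inner_sum_right sum_subtractf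
    by (simp add: algebra_simps)
  finally have "e \<bullet> b y0 - e \<bullet> b x0 = 1/2 * H + G" .
  moreover have "- Lb * norm (x0 - y0) \<le> e \<bullet> b y0 - e \<bullet> b x0"
  proof -
    have "\<bar>e \<bullet> (b x0 - b y0)\<bar> \<le> norm e * norm (b x0 - b y0)"
      by (rule Cauchy_Schwarz_ineq2)
    also have "\<dots> \<le> norm (b x0 - b y0)"
      using e by (simp add: mult_left_le_one_le)
    finally show ?thesis
      using lipschitz_onD[OF b_lip UNIV_I UNIV_I, of x0 y0] by (simp add: dist_norm inner_diff_right abs_le_iff)
  qed
  moreover have "\<delta> * (lyapunov_generator M \<tau> f x0 + lyapunov_generator M \<tau> f y0) = 1/2 * (\<delta> * HV) + \<delta> * GV"
    by (simp add: lyapunov_generator_def HV_def GV_def sum.distrib algebra_simps)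
  moreover have "(K * (Cf - D\<^sup>2 / 2) - Lb) * norm (x0 - y0)
      = K * Cf * norm (x0 - y0) - 1/2 * (K * D\<^sup>2 * norm (x0 - y0)) - Lb * norm (x0 - y0)"
    by (simp add: algebra_simps)
  ultimately show ?thesis
    using noise drift by linarith
qed

lemma continuous_coercive_bounded_above:
  fixes \<phi> :: "'a::euclidean_space \<Rightarrow> real"
  assumes \<phi>: "continuous_on UNIV \<phi>" and coercive: "\<exists>R. \<forall>x. R \<le> norm x \<longrightarrow> \<phi> x \<le> 0"
  obtains A where "\<And>x. \<phi> x \<le> A"
proof -
  obtain R where R: "\<And>x. R \<le> norm x \<Longrightarrow> \<phi> x \<le> 0"
    using coercive by auto
  have "bounded (\<phi> ` cball 0 R)"
    using compact_continuous_image[OF continuous_on_subset[OF \<phi>] compact_cball] compact_imp_bounded by blast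
  then obtain A where "\<forall>x\<in>cball 0 R. norm (\<phi> x) \<le> A"
    unfolding bounded_iff by blast
  then have "\<phi> x \<le> max A 0" for x
    using R[of x] by (cases "norm x \<le> R") force+
  then show ?thesis
    using that by blast
qed

lemma attains_max_if_dominated_by_coercive:
  fixes W :: "'a::euclidean_space \<Rightarrow> 'a \<Rightarrow> real" and \<phi> :: "'a \<Rightarrow> real"
  assumes W: "continuous_on UNIV (\<lambda>z. W (fst z) (snd z))" and \<phi>: "continuous_on UNIV \<phi>"
    and dominated: "\<And>x y. W x y \<le> \<phi> x + \<phi> y"
    and coercive: "\<And>Z. \<exists>R. \<forall>x. R \<le> norm x \<longrightarrow> \<phi> x \<le> - Z"
  obtains x0 y0 where "\<And>x y. W x y \<le> W x0 y0"
proof -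
  have "\<exists>R. \<forall>x. R \<le> norm x \<longrightarrow> \<phi> x \<le> 0"
    using coercive[of 0] by simp
  then obtain A where A: "\<And>x. \<phi> x \<le> A"
    using continuous_coercive_bounded_above[OF \<phi>] by blast
  obtain R where R: "\<And>x. R \<le> norm x \<Longrightarrow> \<phi> x \<le> W 0 0 - (A + 1)"
    using coercive[of "A + 1 - W 0 0"] by auto
  define S :: "('a \<times> 'a) set" where "S = cball 0 (max R 0) \<times> cball 0 (max R 0)"
  have "compact S" "(0, 0) \<in> S"
    by (simp_all add: S_def compact_Times)
  have "\<exists>z\<in>S. \<forall>z'\<in>S. W (fst z') (snd z') \<le> W (fst z) (snd z)"
    by (rule continuous_attains_sup) (use \<open>compact S\<close> \<open>(0, 0) \<in> S\<close> continuous_on_subset[OF W] in auto)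
  then obtain z where z: "\<And>z'. z' \<in> S \<Longrightarrow> W (fst z') (snd z') \<le> W (fst z) (snd z)"
    by blast
  have "W x y \<le> W (fst z) (snd z)" for x y
  proof (cases "(x, y) \<in> S")
    case True
    then show ?thesis
      using z[OF True] by simp
  next
    case False
    then have "R \<le> norm x \<or> R \<le> norm y"
      by (auto simp: S_def)
    then have "W x y \<le> W 0 0 - 1"
      using dominated[of x y] A[of x] A[of y] R[of x] R[of y] by linarith
    also have "\<dots> < W (fst z) (snd z)"
      using z[OF \<open>(0, 0) \<in> S\<close>] by simp
    finally show ?thesis
      by simp
  qed
  then show ?thesis
    using that by blast
qed

lemma doubling_attains_max:
  fixes \<Psi> :: "real^'n \<Rightarrow> 'v::real_inner"
  assumes cont: "continuous_on UNIV \<Psi>" and growth: "\<And>y. norm (\<Psi> y) \<le> C * (1 + norm y) ^ M"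
    and \<delta>: "0 < \<delta>" and e: "norm e \<le> 1" and K: "0 \<le> K"
  obtains x0 y0 where "\<And>x y. doubling e \<Psi> K \<delta> M x y \<le> doubling e \<Psi> K \<delta> M x0 y0"
proof (rule attains_max_if_dominated_by_coercive)
  have "continuous_on UNIV (\<lambda>z. \<Psi> (fst z))"
    by (rule continuous_on_compose2[OF cont]) (auto intro: continuous_intros)
  moreover have "continuous_on UNIV (\<lambda>z. \<Psi> (snd z))"
    by (rule continuous_on_compose2[OF cont]) (auto intro: continuous_intros)
  ultimately show "continuous_on UNIV (\<lambda>z. doubling e \<Psi> K \<delta> M (fst z) (snd z))"
    unfolding doubling_def lyapunov_def by (intro continuous_intros)
  show "continuous_on UNIV (\<lambda>x. norm (\<Psi> x) - \<delta> * lyapunov M x)"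
    unfolding lyapunov_def by (intro continuous_intros cont)
  show "doubling e \<Psi> K \<delta> M x y \<le> (norm (\<Psi> x) - \<delta> * lyapunov M x) + (norm (\<Psi> y) - \<delta> * lyapunov M y)" for x y
  proof -
    have "e \<bullet> (\<Psi> x - \<Psi> y) \<le> norm e * norm (\<Psi> x - \<Psi> y)"
      by (rule norm_cauchy_schwarz)
    also have "\<dots> \<le> norm (\<Psi> x - \<Psi> y)"
      using e by (simp add: mult_left_le_one_le)
    also have "\<dots> \<le> norm (\<Psi> x) + norm (\<Psi> y)"
      by (rule norm_triangle_ineq4)
    finally have "e \<bullet> (\<Psi> x - \<Psi> y) \<le> norm (\<Psi> x) + norm (\<Psi> y)" .
    moreover have "0 \<le> K * norm (x - y)"
      using K by simp
    ultimately show ?thesis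
      unfolding doubling_def distrib_left by linarith
  qed
  show "\<exists>R. \<forall>x. R \<le> norm x \<longrightarrow> norm (\<Psi> x) - \<delta> * lyapunov M x \<le> - Z" for Z
  proof -
    obtain R where R: "\<And>x. R \<le> norm x \<Longrightarrow> norm (\<Psi> x) - \<delta> * lyapunov M x \<le> - max Z 0"
      using poly_growth_minus_lyapunov_coercive[OF growth \<delta>, of "max Z 0"] by auto
    have "norm (\<Psi> x) - \<delta> * lyapunov M x \<le> - Z" if "R \<le> norm x" for x
      using R[OF that] max.cobounded1[of Z 0] by linarith
    then show ?thesis
      by blast
  qed
qed (rule that)

lemma doubling_max_nonpos:
  fixes \<tau> :: "real^'n \<Rightarrow> real^'l^'n" and f :: "real^'n \<Rightarrow> real^'n" and \<Psi> b :: "real^'n \<Rightarrow> 'v::real_inner"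
  assumes C2: "C2_fun \<Psi>" and poisson: "\<And>y. generator \<tau> f \<Psi> y = - b y"
    and b_lip: "Lb-lipschitz_on UNIV b" and \<tau>_lip: "D-lipschitz_on UNIV \<tau>"
    and f_dissipative: "\<And>x y. (f x - f y) \<bullet> (x - y) \<le> - Cf * (norm (x - y))\<^sup>2"
    and confined: "\<And>x y. 0 \<le> lyapunov_generator M \<tau> f x + lyapunov_generator M \<tau> f y \<Longrightarrow> norm x \<le> R"
    and \<Psi>_lip: "L-lipschitz_on (cball 0 R) \<Psi>"
    and K: "L \<le> K" "Lb \<le> K * (Cf - D\<^sup>2 / 2)"
    and e: "norm e \<le> 1" and \<delta>: "0 < \<delta>"
    and max: "\<And>x y. doubling e \<Psi> K \<delta> M x y \<le> doubling e \<Psi> K \<delta> M x0 y0"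
  shows "doubling e \<Psi> K \<delta> M x0 y0 \<le> 0"
proof (cases "x0 = y0")
  case True
  then show ?thesis
    using \<delta> lyapunov_nonneg[of M y0] by (simp add: doubling_def)
next
  case False
  have "0 \<le> K"
    using lipschitz_on_nonneg[OF \<Psi>_lip] K(1) by linarith
  have "0 \<le> (K * (Cf - D\<^sup>2 / 2) - Lb) * norm (x0 - y0)"
    using K(2) by simp
  also have "\<dots> \<le> \<delta> * (lyapunov_generator M \<tau> f x0 + lyapunov_generator M \<tau> f y0)"
    by (rule doubling_max_point_ineq[OF C2 poisson b_lip \<tau>_lip f_dissipative e \<open>0 \<le> K\<close> max False])
  finally have "0 \<le> lyapunov_generator M \<tau> f x0 + lyapunov_generator M \<tau> f y0"
    using \<delta> by (simp add: zero_le_mult_iff)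
  then have "x0 \<in> cball 0 R" "y0 \<in> cball 0 R"
    using confined[of x0 y0] confined[of y0 x0] by (simp_all add: add.commute)
  then have "e \<bullet> (\<Psi> x0 - \<Psi> y0) \<le> L * norm (x0 - y0)"
    using lipschitz_onD[OF \<Psi>_lip] norm_cauchy_schwarz[of e] e
    by (metis dist_norm mult_left_le_one_le norm_ge_zero order_trans)
  also have "\<dots> \<le> K * norm (x0 - y0)"
    using K(1) by (simp add: mult_right_mono)
  moreover have "0 \<le> \<delta> * (lyapunov M x0 + lyapunov M y0)"
    using \<delta> by (intro mult_nonneg_nonneg add_nonneg_nonneg lyapunov_nonneg) simp
  ultimately show ?thesis
    unfolding doubling_def by linarith
qed

lemma poisson_solution_lipschitz:
  fixes \<tau> :: "real^'n \<Rightarrow> real^'l^'n" and f :: "real^'n \<Rightarrow> real^'n" and \<Psi> b :: "real^'n \<Rightarrow> 'v::real_inner"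
  assumes C2: "C2_fun \<Psi>" and poisson: "\<And>y. generator \<tau> f \<Psi> y = - b y"
    and growth: "\<And>y. norm (\<Psi> y) \<le> C * (1 + norm y) ^ M"
    and b_lip: "Lb-lipschitz_on UNIV b" and \<tau>_lip: "D-lipschitz_on UNIV \<tau>" and \<tau>_bounded: "\<And>x. norm (\<tau> x) \<le> T"
    and f_dissipative: "\<And>x y. (f x - f y) \<bullet> (x - y) \<le> - Cf * (norm (x - y))\<^sup>2"
    and small_noise: "D\<^sup>2 / 2 < Cf"
  obtains K where "K-lipschitz_on UNIV \<Psi>"
proof -
  have Cf: "0 < Cf"
    using small_noise zero_le_power2[of D] by linarith
  obtain R where confined:
    "\<And>x y. 0 \<le> lyapunov_generator M \<tau> f x + lyapunov_generator M \<tau> f y \<Longrightarrow> norm x \<le> R"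
    using lyapunov_generator_sum_nonneg_imp_bounded[where \<tau>=\<tau> and M=M,
        OF \<tau>_bounded dissipative_inner_le[OF f_dissipative] Cf norm_ge_zero] by blast
  obtain L where \<Psi>_lip: "L-lipschitz_on (cball 0 R) \<Psi>"
    using C2_fun_lipschitz_on_compact_convex[OF C2 compact_cball convex_cball] by blast
  \<comment> \<open>R and L do not depend on the penalty weight \<delta>, so K can be fixed before \<delta> \<rightarrow> 0.\<close>
  define K where "K = max L (Lb / (Cf - D\<^sup>2 / 2))"
  have "Lb / (Cf - D\<^sup>2 / 2) \<le> K"
    by (simp add: K_def)
  then have K: "L \<le> K" "Lb \<le> K * (Cf - D\<^sup>2 / 2)"
    using small_noise by (simp_all add: pos_divide_le_eq) (simp add: K_def)
  have "0 \<le> K"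
    using lipschitz_on_nonneg[OF \<Psi>_lip] K(1) by linarith
  have cont: "continuous_on UNIV \<Psi>"
    using C2 unfolding C2_fun_def by (intro continuous_at_imp_continuous_on ballI differentiable_imp_continuous_within) simp
  have "e \<bullet> (\<Psi> x - \<Psi> y) \<le> K * norm (x - y)" if e: "norm e \<le> 1" for e x y
  proof (rule le_if_le_add_pos_mult)
    fix \<delta> :: real
    assume \<delta>: "0 < \<delta>"
    obtain x0 y0 where max: "\<And>x y. doubling e \<Psi> K \<delta> M x y \<le> doubling e \<Psi> K \<delta> M x0 y0"
      using doubling_attains_max[OF cont growth \<delta> e \<open>0 \<le> K\<close>] by blast
    have "doubling e \<Psi> K \<delta> M x0 y0 \<le> 0"
      by (rule doubling_max_nonpos[OF C2 poisson b_lip \<tau>_lip f_dissipative confined \<Psi>_lip K e \<delta> max])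
    then show "e \<bullet> (\<Psi> x - \<Psi> y) \<le> K * norm (x - y) + \<delta> * (lyapunov M x + lyapunov M y)"
      using max[of x y] by (simp add: doubling_def)
  qed
  then have "K-lipschitz_on UNIV \<Psi>"
    using \<open>0 \<le> K\<close> by (rule lipschitz_on_UNIV_if_inner_le)
  then show ?thesis ..
qed

theorem mainTheorem15:
  fixes \<tau> :: "real^'n \<Rightarrow> real^'l^'n"
    and \<Gamma> :: "real^'n^'n"
    and \<zeta> :: "real^'n \<Rightarrow> real^'n"
    and f :: "real^'n \<Rightarrow> real^'n"
    and b \<Psi> :: "real^'n \<Rightarrow> real^'m"
    and \<mu> :: "(real^'n) measure"
    and C_f :: real
  assumes tau_C1b: "C1b_fun \<tau>"
    and tau_nondeg: "\<exists>c>0. \<forall>y \<xi>. \<xi> \<bullet> ((\<tau> y ** transpose (\<tau> y)) *v \<xi>) \<ge> c * (norm \<xi>)\<^sup>2"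
    and f_def: "\<And>y. f y = - (\<Gamma> *v y) + \<zeta> y"
    and Gamma_sym: "transpose \<Gamma> = \<Gamma>"
    and Gamma_pd: "\<And>y. y \<noteq> 0 \<Longrightarrow> y \<bullet> (\<Gamma> *v y) > 0"
    and zeta_C1b: "C1b_fun \<zeta>"
    and Cf_pos: "C_f > 0"
    and Cf_ineq: "\<And>y. ((\<Gamma> - sup_deriv_norm \<zeta> *\<^sub>R mat 1) *v y) \<bullet> y \<ge> C_f * (norm y)\<^sup>2"
    and mu_inv: "invariant_measure \<tau> f \<mu>"
    and b_diff: "\<exists>b'. (\<forall>y. (b has_derivative blinfun_apply (b' y)) (at y)) \<and>
                       continuous_on UNIV b' \<and> bounded (range b')"
    and b_int: "integrable \<mu> b"
    and b_centered: "(\<integral>y. b y \<partial>\<mu>) = 0"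
    and Psi_C2: "C2_fun \<Psi>"
    and Psi_poisson: "\<And>y. generator \<tau> f \<Psi> y = - b y"
    and Psi_int: "integrable \<mu> \<Psi>"
    and Psi_centered: "(\<integral>y. \<Psi> y \<partial>\<mu>) = 0"
    and Psi_polygrowth: "\<exists>C (k::nat). \<forall>y. norm (\<Psi> y) \<le> C * (1 + norm y) ^ k"
    and small_noise: "(sup_deriv_norm \<tau>)\<^sup>2 <
        C_f / (BDG_C2 * (4 * max ((sup_deriv_norm f)\<^sup>2 / C_f\<^sup>2) 1))"
  shows "\<exists>B. \<forall>y. onorm (frechet_derivative \<Psi> (at y)) \<le> B"
proof -
  obtain C M where growth: "\<And>y. norm (\<Psi> y) \<le> C * (1 + norm y) ^ M"
    using Psi_polygrowth by blast
  obtain b' where "\<And>y. (b has_derivative blinfun_apply (b' y)) (at y)" and "bounded (range b')"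
    using b_diff by blast
  then obtain Lb where b_lip: "Lb-lipschitz_on UNIV b"
    by (rule bounded_blinfun_derivative_imp_lipschitz)
  obtain T where \<tau>_bounded: "\<And>x. norm (\<tau> x) \<le> T"
    using tau_C1b unfolding C1b_fun_def bounded_iff by auto
  have f_dissipative: "(f x - f y) \<bullet> (x - y) \<le> - C_f * (norm (x - y))\<^sup>2" for x y
    by (rule linear_plus_lipschitz_dissipative[OF f_def C1b_fun_lipschitz[OF zeta_C1b] Cf_ineq])
  \<comment> \<open>With BDG_C2 = 4 and the maximum at least 1 the hypothesis gives |D\<tau>|^2 < C_f / 16;
    only |D\<tau>|^2 / 2 < C_f is used.\<close>
  have "C_f / (BDG_C2 * (4 * max ((sup_deriv_norm f)\<^sup>2 / C_f\<^sup>2) 1)) \<le> C_f / 16"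
    using Cf_pos by (intro divide_left_mono) (auto simp: BDG_C2_def)
  then have "(sup_deriv_norm \<tau>)\<^sup>2 / 2 < C_f"
    using small_noise Cf_pos by linarith
  then obtain K where "K-lipschitz_on UNIV \<Psi>"
    using poisson_solution_lipschitz[OF Psi_C2 Psi_poisson growth b_lip C1b_fun_lipschitz[OF tau_C1b]
        \<tau>_bounded f_dissipative] by blast
  then have "onorm (frechet_derivative \<Psi> (at y)) \<le> K" for y
    using Psi_C2 by (intro lipschitz_on_UNIV_imp_onorm_frechet_derivative_le) (simp_all add: C2_fun_def)
  then show ?thesis
    by blast
qed

end
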